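(* The collection $\mathrm{RW}=(\mathrm{RW}(n))_{n\ge1}$ of labelled red and white trees, endowed with the compositions $\circ_x$ defined below and with the action of $S_n$ on $\mathrm{RW}(n)$ by relabelling, is a symmetric set-operad (in particular a non-symmetric set-operad, with unit the one-node tree labelled $\{1\}$).
   Context: Labelled red and white trees: for $n\ge1$, $\mathrm{RW}(n)$ is the set of finite rooted trees (children unordered, trees up to label-preserving isomorphism) in which each node $z$ carries a possibly empty label set $L(z)\subseteq[n]=\{1,\dots,n\}$, the sets $L(z)$ partition $[n]$, and every node with $L(z)=\emptyset$ has at least two children. Nodes are coloured: a node with nonempty label set is white; a node with empty label set is red if all its children are white, and white otherwise. The colouring is thus determined by the tree. $S_n$ acts by applying $\sigma$ to all labels. Composition: for $T_1\in\mathrm{RW}(m)$, $T_2\in\mathrm{RW}(n)$, $x\in[m]$, first relabel: in $T_1$ replace every label $y>x$ by $y+n-1$; in $T_2$ replace every label $y$ by $y+x-1$. Let $z$ be the node of $T_1$ with $x\in L(z)$ and $r$ the root of $T_2$. Then $T_1\circ_xT_2\in\mathrm{RW}(m+n-1)$ is: (W) if $r$ is not red: remove $x$ from $L(z)$, add $L(r)$ to $L(z)$, and make the children of $r$ children of $z$ ($r$ disappears); (R1) if $r$ is red and $T_1$ is the single node labelled $\{x\}$: the result is $T_2$; (R2) if $r$ is red and $z$ has at least one child or $|L(z)|\ge2$: remove $x$ from $L(z)$ and attach $T_2$ (with its root $r$) as a new child subtree of $z$; (R3) if $r$ is red, $z$ is a leaf with $L(z)=\{x\}$ and $z$ is not the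 root: let $z'$ be the parent of $z$; delete $z$ and make the children of $r$ children of $z'$. Colours of the result are those given by the colouring rule. *)

theory Defs
  imports "HOL-Library.Multiset" "HOL-Combinatorics.Permutations"
begin

text \<open>P n is the set of operations of arity n; c a x b is the partial composition a \<circ>_x b;
  act \<sigma> a is the action of a permutation \<sigma> of {1..n} (a function nat \<Rightarrow> nat with
  \<sigma> permutes {1..n}) on a \<in> P n; e is the unit.\<close>

definition ns_set_operad ::
  "(nat \<Rightarrow> 'a set) \<Rightarrow> ('a \<Rightarrow> nat \<Rightarrow> 'a \<Rightarrow> 'a) \<Rightarrow> 'a \<Rightarrow> bool" where
  "ns_set_operad P c e \<longleftrightarrow>
     e \<in> P 1 \<and>
     (\<forall>m n a b x. 1 \<le> m \<longrightarrow> 1 \<le> n \<longrightarrow> a \<in> P m \<longrightarrow> b \<in> P n \<longrightarrow> x \<in> {1..m}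
        \<longrightarrow> c a x b \<in> P (m + n - 1)) \<and>
     (\<forall>m a. 1 \<le> m \<longrightarrow> a \<in> P m \<longrightarrow> c e 1 a = a) \<and>
     (\<forall>m a x. 1 \<le> m \<longrightarrow> a \<in> P m \<longrightarrow> x \<in> {1..m} \<longrightarrow> c a x e = a) \<and>
     (\<forall>m n k a b d x y. 1 \<le> m \<longrightarrow> 1 \<le> n \<longrightarrow> 1 \<le> k \<longrightarrow>
        a \<in> P m \<longrightarrow> b \<in> P n \<longrightarrow> d \<in> P k \<longrightarrow> x \<in> {1..m} \<longrightarrow> y \<in> {1..n} \<longrightarrow>
        c (c a x b) (x + y - 1) d = c a x (c b y d)) \<and>
     (\<forall>m n k a b d x y. 1 \<le> m \<longrightarrow> 1 \<le> n \<longrightarrow> 1 \<le> k \<longrightarrow>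
        a \<in> P m \<longrightarrow> b \<in> P n \<longrightarrow> d \<in> P k \<longrightarrow> x \<in> {1..m} \<longrightarrow> y \<in> {1..m} \<longrightarrow> x < y \<longrightarrow>
        c (c a x b) (y + n - 1) d = c (c a y d) x b)"

text \<open>The block permutation \<sigma> \<circ>_x \<tau> of {1..m+n-1} for \<sigma> permuting {1..m} and
  \<tau> permuting {1..n}: the letter x of {1..m} is replaced by the block {x..x+n-1}.\<close>

definition block_perm :: "nat \<Rightarrow> nat \<Rightarrow> nat \<Rightarrow> (nat \<Rightarrow> nat) \<Rightarrow> (nat \<Rightarrow> nat) \<Rightarrow> nat \<Rightarrow> nat" where
  "block_perm m n x \<sigma> \<tau> k =
     (let s = (\<lambda>y. if \<sigma> y < \<sigma> x then \<sigma> y else \<sigma> y + n - 1) in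
      if k < 1 \<or> m + n - 1 < k then k
      else if k < x then s k
      else if k < x + n then \<tau> (k - x + 1) + \<sigma> x - 1
      else s (k - n + 1))"

definition sym_set_operad ::
  "(nat \<Rightarrow> 'a set) \<Rightarrow> ('a \<Rightarrow> nat \<Rightarrow> 'a \<Rightarrow> 'a) \<Rightarrow> ((nat \<Rightarrow> nat) \<Rightarrow> 'a \<Rightarrow> 'a) \<Rightarrow> 'a \<Rightarrow> bool" where
  "sym_set_operad P c act e \<longleftrightarrow>
     ns_set_operad P c e \<and>
     (\<forall>n \<sigma> a. 1 \<le> n \<longrightarrow> \<sigma> permutes {1..n} \<longrightarrow> a \<in> P n \<longrightarrow> act \<sigma> a \<in> P n) \<and>
     (\<forall>n a. 1 \<le> n \<longrightarrow> a \<in> P n \<longrightarrow> act id a = a) \<and>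
     (\<forall>n \<sigma> \<tau> a. 1 \<le> n \<longrightarrow> \<sigma> permutes {1..n} \<longrightarrow> \<tau> permutes {1..n} \<longrightarrow> a \<in> P n \<longrightarrow>
        act (\<sigma> \<circ> \<tau>) a = act \<sigma> (act \<tau> a)) \<and>
     (\<forall>m n \<sigma> \<tau> a b x. 1 \<le> m \<longrightarrow> 1 \<le> n \<longrightarrow> \<sigma> permutes {1..m} \<longrightarrow> \<tau> permutes {1..n} \<longrightarrow>
        a \<in> P m \<longrightarrow> b \<in> P n \<longrightarrow> x \<in> {1..m} \<longrightarrow>
        c (act \<sigma> a) (\<sigma> x) (act \<tau> b) = act (block_perm m n x \<sigma> \<tau>) (c a x b))"

text \<open>Rooted trees with unordered children: the children of a node form a multiset,
  so equality of terms is exactly label-preserving isomorphism of trees.\<close>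

datatype rwt = Node (lbl: "nat set") (kids: "rwt multiset")

primrec labm :: "rwt \<Rightarrow> nat multiset" where
  "labm (Node L cs) = mset_set L + sum_mset (image_mset labm cs)"

primrec rw_ok :: "rwt \<Rightarrow> bool" where
  "rw_ok (Node L cs) \<longleftrightarrow> finite L \<and> (L = {} \<longrightarrow> 2 \<le> size cs) \<and> (\<forall>b \<in># image_mset rw_ok cs. b)"

text \<open>RW(n): label sets partition {1..n} (exact multiplicity one for each label).\<close>
definition RW :: "nat \<Rightarrow> rwt set" where
  "RW n = {T. rw_ok T \<and> labm T = mset_set {1..n}}"

primrec red :: "rwt \<Rightarrow> bool" where
  "red (Node L cs) \<longleftrightarrow> L = {} \<and> (\<forall>b \<in># image_mset red cs. \<not> b)"

primrec relab :: "(nat \<Rightarrow> nat) \<Rightarrow> rwt \<Rightarrow> rwt" where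
  "relab f (Node L cs) = Node (f ` L) (image_mset (relab f) cs)"

definition arity :: "rwt \<Rightarrow> nat" where
  "arity T = size (labm T)"

text \<open>Grafting the (already relabelled) tree S at the node containing x; the result is the
  multiset of trees replacing the current subtree (a single tree, except in case R3 where a
  leaf labelled {x} is replaced by the children of the red root of S).\<close>
primrec graft :: "nat \<Rightarrow> rwt \<Rightarrow> rwt \<Rightarrow> rwt multiset" where
  "graft x S (Node L cs) =
     (if x \<in> L then
        (if \<not> red S then {# Node ((L - {x}) \<union> lbl S) (cs + kids S) #}
         else if cs \<noteq> {#} \<or> L \<noteq> {x} then {# Node (L - {x}) (cs + {# S #}) #}
         else kids S)
      else {# Node L (sum_mset (image_mset (graft x S) cs)) #})"

definition rw_comp :: "rwt \<Rightarrow> nat \<Rightarrow> rwt \<Rightarrow> rwt" where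
  "rw_comp T1 x T2 =
     (let n = arity T2;
          A = relab (\<lambda>y. if x < y then y + n - 1 else y) T1;
          B = relab (\<lambda>y. y + x - 1) T2
      in if red B \<and> A = Node {x} {#} then B
         else the_elem (set_mset (graft x B A)))"

definition rw_act :: "(nat \<Rightarrow> nat) \<Rightarrow> rwt \<Rightarrow> rwt" where
  "rw_act \<sigma> T = relab \<sigma> T"

definition rw_unit :: rwt where
  "rw_unit = Node {1} {#}"

end

theory Submission
  imports Defs
begin

text \<open>
  Up to relabelling, \<open>T\<^sub>1 \<circ>\<^sub>x T\<^sub>2\<close> grafts \<open>T\<^sub>2\<close> at the node of \<open>T\<^sub>1\<close> carrying \<open>x\<close>: a
  white root of \<open>T\<^sub>2\<close> is merged into that node, a red one is attached below it (or replaces it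
  if the node is the leaf \<open>{x}\<close>). Both associativity axioms reduce to the statement that two
  graftings into the same tree commute, when the second label lies inside the first grafted tree
  (nested case) or elsewhere in the outer tree (disjoint case). This is proved by structural induction
  on the outer tree; the only real work is the case analysis on the colours of the roots at the node
  carrying the labels. Equivariance holds because relabelling commutes with grafting and the block
  permutation is exactly the relabelling converting the shifts of one side into those of the other.
\<close>

primrec labels :: "rwt \<Rightarrow> nat set" where
  "labels (Node L cs) = L \<union> \<Union> (set_mset (image_mset labels cs))"

lemma set_mset_labm: "rw_ok T \<Longrightarrow> set_mset (labm T) = labels T"
  by (induction T) auto

lemma labels_relab [simp]: "labels (relab f T) = f ` labels T"
  by (induction T) auto

lemma red_relab [simp]: "red (relab f T) = red T"
  by (induction T) auto

lemma rw_ok_relab: "rw_ok T \<Longrightarrow> rw_ok (relab f T)"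
  by (induction T) auto

lemma relab_relab: "relab f (relab g T) = relab (f \<circ> g) T"
  by (induction T) (auto simp: image_comp multiset.map_comp intro!: image_mset_cong)

lemma relab_cong: "(\<And>y. y \<in> labels T \<Longrightarrow> f y = g y) \<Longrightarrow> relab f T = relab g T"
  by (induction T) (auto intro!: image_mset_cong image_cong)

lemma relab_ident: "relab (\<lambda>y. y) T = T"
  by (induction T) (auto intro: image_mset_cong[where g="\<lambda>x. x", simplified])

lemma image_mset_sum_mset:
  "image_mset g (\<Sum>\<^sub># (image_mset h M)) = (\<Sum>c\<in>#M. image_mset g (h c))"
  by (induction M) auto

lemma sum_mset_image_sum_mset:
  "\<Sum>\<^sub># (image_mset g (\<Sum>\<^sub># (image_mset h M))) = (\<Sum>c\<in>#M. \<Sum>\<^sub># (image_mset g (h c)))"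
  by (induction M) auto

lemma labm_relab: "rw_ok T \<Longrightarrow> inj_on f (labels T) \<Longrightarrow> labm (relab f T) = image_mset f (labm T)"
proof (induction T)
  case (Node L cs)
  have "inj_on f L" using Node.prems(2) by (auto intro: inj_on_subset)
  then have "mset_set (f ` L) = image_mset f (mset_set L)" by (simp add: image_mset_mset_set)
  moreover have "image_mset (\<lambda>c. labm (relab f c)) cs = image_mset (\<lambda>c. image_mset f (labm c)) cs"
    using Node by (auto intro!: image_mset_cong inj_on_subset)
  ultimately show ?case by (simp add: image_mset_sum_mset multiset.map_comp comp_def)
qed

abbreviation graft_forest :: "nat \<Rightarrow> rwt \<Rightarrow> rwt multiset \<Rightarrow> rwt multiset" where
  "graft_forest x S M \<equiv> \<Sum>\<^sub># (image_mset (graft x S) M)"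

lemma graft_white:
  "x \<in> L \<Longrightarrow> \<not> red S \<Longrightarrow> graft x S (Node L cs) = {#Node ((L - {x}) \<union> lbl S) (cs + kids S)#}"
  by simp

lemma graft_red_attach:
  "x \<in> L \<Longrightarrow> red S \<Longrightarrow> Node L cs \<noteq> Node {x} {#} \<Longrightarrow>
   graft x S (Node L cs) = {#Node (L - {x}) (cs + {#S#})#}"
  by auto

lemma graft_red_leaf: "red S \<Longrightarrow> graft x S (Node {x} {#}) = kids S"
  by simp

lemma graft_below: "x \<notin> L \<Longrightarrow> graft x S (Node L cs) = {#Node L (graft_forest x S cs)#}"
  by simp

declare graft.simps [simp del]

lemma graft_absent: "x \<notin> labels T \<Longrightarrow> graft x S T = {#T#}"
proof (induction T)
  case (Node L cs)
  have "graft_forest x S cs = (\<Sum>c\<in>#cs. {#c#})"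
    using Node by (intro arg_cong[where f=sum_mset] image_mset_cong) auto
  then show ?case using Node.prems by (simp add: graft_below)
qed

lemma graft_forest_absent: "(\<And>c. c \<in># cs \<Longrightarrow> x \<notin> labels c) \<Longrightarrow> graft_forest x S cs = cs"
  by (metis (mono_tags, lifting) Union_image_single_mset graft_absent image_mset_cong)

lemma graft_nonempty:
  assumes "rw_ok S"
  shows "graft x S T \<noteq> {#}"
proof -
  obtain L cs where T: "T = Node L cs" by (cases T)
  have "red S \<Longrightarrow> kids S \<noteq> {#}" using assms by (cases S) auto
  then show ?thesis
    using T by (cases "x \<in> L"; cases "red S") (auto simp: graft.simps)
qed

lemma graft_forest_nonempty: "rw_ok S \<Longrightarrow> cs \<noteq> {#} \<Longrightarrow> graft_forest x S cs \<noteq> {#}"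
  by (induction cs) (auto simp: graft_nonempty)

lemma size_graft_forest: "rw_ok S \<Longrightarrow> size cs \<le> size (graft_forest x S cs)"
proof (induction cs)
  case (add c cs)
  have "1 \<le> size (graft x S c)"
    using graft_nonempty[OF add.prems] by (simp add: Suc_leI nonempty_has_size)
  then show ?case using add by simp
qed simp

lemma not_red_graft_iff: "(\<forall>t\<in>#graft x S T. \<not> red t) \<longleftrightarrow> \<not> red T"
proof (induction T)
  case (Node L cs)
  show ?case
  proof (cases "x \<in> L")
    case True
    then show ?thesis by (cases S) (auto simp: graft.simps)
  next
    case False
    have "(\<forall>t\<in>#graft_forest x S cs. \<not> red t) \<longleftrightarrow> (\<forall>c\<in>#cs. \<not> red c)"
      using Node.IH by auto
    then show ?thesis using False by (simp add: graft_below)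
  qed
qed

lemma rw_ok_graft: "rw_ok S \<Longrightarrow> rw_ok T \<Longrightarrow> t \<in># graft x S T \<Longrightarrow> rw_ok t"
proof (induction T arbitrary: t)
  case (Node L cs)
  show ?case
  proof (cases "x \<in> L")
    case xL: True
    consider "\<not> red S" | "red S" "cs = {#}" "L = {x}" | "red S" "Node L cs \<noteq> Node {x} {#}"
      by auto
    then show ?thesis
    proof cases
      case 1
      then show ?thesis using Node.prems xL by (cases S) (auto simp: graft_white)
    next
      case 2
      then show ?thesis using Node.prems by (cases S) (auto simp: graft_red_leaf)
    next
      case 3
      have "L - {x} = {} \<Longrightarrow> cs \<noteq> {#}" using 3(2) xL by auto
      then have "L - {x} = {} \<Longrightarrow> 2 \<le> size (cs + {#S#})"
        by (simp add: Suc_leI nonempty_has_size)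
      moreover have "t = Node (L - {x}) (cs + {#S#})"
        using Node.prems(3) graft_red_attach[OF xL 3] by simp
      ultimately show ?thesis using Node.prems by auto
    qed
  next
    case False
    have "L = {} \<Longrightarrow> 2 \<le> size (graft_forest x S cs)"
      using Node.prems size_graft_forest[OF Node.prems(1), of cs x] by auto
    moreover have "rw_ok u" if "u \<in># graft_forest x S cs" for u
      using that Node by (auto simp: in_Union_mset_iff)
    ultimately show ?thesis using Node.prems False by (auto simp: graft_below)
  qed
qed

lemma graft_unit: "graft x (Node {x} {#}) T = {#T#}"
proof (induction T)
  case (Node L cs)
  show ?case
  proof (cases "x \<in> L")
    case True
    then have "(L - {x}) \<union> {x} = L" by auto
    then show ?thesis using True by (simp add: graft_white)
  next
    case False
    have "graft_forest x (Node {x} {#}) cs = (\<Sum>c\<in>#cs. {#c#})"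
      using Node by (intro arg_cong[where f=sum_mset] image_mset_cong) auto
    then show ?thesis using False by (simp add: graft_below)
  qed
qed

text \<open>Composition before relabelling. If \<open>T\<close> is the leaf \<open>{x}\<close> and \<open>S\<close> is red, \<open>graft\<close>
  applies R3 at the root and returns the children of \<open>S\<close>; case R1 returns \<open>S\<close> itself.\<close>

definition plug :: "nat \<Rightarrow> rwt \<Rightarrow> rwt \<Rightarrow> rwt" where
  "plug x S T = (if red S \<and> T = Node {x} {#} then S else the_elem (set_mset (graft x S T)))"

lemma graft_eq_plug: "\<not> (red S \<and> T = Node {x} {#}) \<Longrightarrow> graft x S T = {#plug x S T#}"
proof -
  assume no_R1: "\<not> (red S \<and> T = Node {x} {#})"
  obtain L cs where T: "T = Node L cs" by (cases T)
  have "red S \<Longrightarrow> Node L cs \<noteq> Node {x} {#}" using no_R1 T by simp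
  then consider "x \<notin> L" | "x \<in> L" "\<not> red S" | "x \<in> L" "red S" "Node L cs \<noteq> Node {x} {#}"
    by auto
  then have "\<exists>t. graft x S T = {#t#}"
  proof cases
    case 1
    then show ?thesis by (simp add: T graft_below)
  next
    case 2
    then show ?thesis by (simp add: T graft_white)
  next
    case 3
    then show ?thesis by (simp only: T graft_red_attach[OF 3]) blast
  qed
  then obtain t where t: "graft x S T = {#t#}" ..
  have "plug x S T = the_elem (set_mset (graft x S T))"
    unfolding plug_def using no_R1 by (rule if_not_P)
  with t show ?thesis by simp
qed

lemma plug_eqI: "\<not> (red S \<and> T = Node {x} {#}) \<Longrightarrow> graft x S T = {#t#} \<Longrightarrow> plug x S T = t"
  using graft_eq_plug[of S T x] by simp

lemma plug_leaf: "plug x S (Node {x} {#}) = S"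
proof (cases "red S")
  case False
  then have "graft x S (Node {x} {#}) = {#S#}" by (cases S) (simp add: graft_white)
  then show ?thesis using False by (simp add: plug_def)
qed (simp add: plug_def)

lemma plug_not_leaf:
  assumes "rw_ok S" "x \<in> labels T" "T \<noteq> Node {x} {#}" "y \<notin> labels T - {x} \<or> y \<notin> labels S"
  shows "plug x S T \<noteq> Node {y} {#}"
proof
  assume "plug x S T = Node {y} {#}"
  then have leaf: "graft x S T = {#Node {y} {#}#}"
    using graft_eq_plug[of S T x] assms(3) by simp
  obtain L cs where T: "T = Node L cs" by (cases T)
  obtain Ls ks where S: "S = Node Ls ks" by (cases S)
  consider "x \<notin> L" | "x \<in> L" "red S" | "x \<in> L" "\<not> red S"
    by blast
  then show False
  proof cases
    case 1
    then have "cs \<noteq> {#}" using assms(2) T by auto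
    then have "graft_forest x S cs \<noteq> {#}" using assms(1) by (rule graft_forest_nonempty[rotated])
    moreover have "graft x S T = {#Node L (graft_forest x S cs)#}" using T 1 graft_below by simp
    ultimately show False using leaf by simp
  next
    case 2
    then have "graft x S T = {#Node (L - {x}) (cs + {#S#})#}"
      using T assms(3) graft_red_attach[of x L S cs] by simp
    then show False using leaf by simp
  next
    case 3
    then have "graft x S T = {#Node ((L - {x}) \<union> Ls) (cs + ks)#}"
      using T S graft_white[of x L S cs] by simp
    then have root: "(L - {x}) \<union> Ls = {y}" and "cs = {#}" "ks = {#}"
      using leaf by simp_all
    then have "Ls \<noteq> {}" using assms(1) S by simp
    have "L \<noteq> {x}" using assms(3) T \<open>cs = {#}\<close> by simp
    have "Ls \<subseteq> {y}" "L - {x} \<subseteq> {y}" using root by (metis Un_upper2, metis Un_upper1)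
    moreover have "L - {x} \<noteq> {}" using 3(1) \<open>L \<noteq> {x}\<close> by auto
    ultimately have "y \<in> Ls" "y \<in> L - {x}" using \<open>Ls \<noteq> {}\<close> by (auto simp: subset_singleton_iff)
    then show False using assms(4) T S by auto
  qed
qed

lemma plug_below:
  assumes "y \<notin> Lb"
  shows "plug y d (Node Lb kb) = Node Lb (graft_forest y d kb)"
    and "red (Node Lb (graft_forest y d kb)) \<longleftrightarrow> red (Node Lb kb)"
proof -
  have "graft y d (Node Lb kb) = {#Node Lb (graft_forest y d kb)#}"
    using assms by (rule graft_below)
  then show "plug y d (Node Lb kb) = Node Lb (graft_forest y d kb)"
    using assms by (intro plug_eqI) auto
  show "red (Node Lb (graft_forest y d kb)) \<longleftrightarrow> red (Node Lb kb)"
    by (simp add: not_red_graft_iff)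
qed

section \<open>Nested grafting\<close>

text \<open>No occurrence of x lies below another one. This is weaker than uniqueness of x but,
  unlike it, is inherited by all subtrees, which makes it the right invariant for induction.\<close>

primrec unnested :: "nat \<Rightarrow> rwt \<Rightarrow> bool" where
  "unnested x (Node L cs) =
     (if x \<in> L then (\<forall>c\<in>#cs. x \<notin> labels c) else (\<forall>b\<in>#image_mset (unnested x) cs. b))"

lemma graft_nested_root_below:
  assumes xL: "x \<in> L" and yL: "y \<notin> L - {x}" and ycs: "\<And>c. c \<in># cs \<Longrightarrow> y \<notin> labels c"
    and b: "b = Node Lb kb" and yb: "y \<notin> Lb"
  shows "graft_forest y d (graft x b (Node L cs)) = graft x (plug y d b) (Node L cs)"
proof -
  have cs: "graft_forest y d cs = cs" using ycs by (rule graft_forest_absent)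
  have b': "plug y d b = Node Lb (graft_forest y d kb)"
    and red_b': "red (plug y d b) \<longleftrightarrow> red b"
    using plug_below[OF yb] b by simp_all
  consider "\<not> red b" | "red b" "Node L cs = Node {x} {#}" | "red b" "Node L cs \<noteq> Node {x} {#}"
    by auto
  then show ?thesis
  proof cases
    case 1
    then have "y \<notin> (L - {x}) \<union> Lb" using yL yb by blast
    then show ?thesis
      using 1 b b' red_b' cs xL by (simp add: graft_white graft_below)
  next
    case 2
    then show ?thesis using b b' red_b' by (simp add: graft_red_leaf)
  next
    case 3
    have "y \<notin> L - {x}" using yL .
    then show ?thesis
      using 3 b b' red_b' cs xL by (simp add: graft_red_attach graft_below)
  qed
qed

lemma graft_nested_root_white:
  assumes xL: "x \<in> L" and yL: "y \<notin> L - {x}" and ycs: "\<And>c. c \<in># cs \<Longrightarrow> y \<notin> labels c"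
    and b: "b = Node Lb kb" and yb: "y \<in> Lb" and d: "\<not> red d"
  shows "graft_forest y d (graft x b (Node L cs)) = graft x (plug y d b) (Node L cs)"
proof -
  have "\<not> red b" using b yb by auto
  then have left: "graft x b (Node L cs) = {#Node ((L - {x}) \<union> Lb) (cs + kb)#}"
    using xL b by (simp add: graft_white)
  have "graft y d b = {#Node ((Lb - {y}) \<union> lbl d) (kb + kids d)#}"
    using yb d b by (simp add: graft_white)
  then have b': "plug y d b = Node ((Lb - {y}) \<union> lbl d) (kb + kids d)"
    using d by (intro plug_eqI) auto
  have "\<not> red (plug y d b)" using b' d by (cases d) auto
  then have right: "graft x (plug y d b) (Node L cs) = {#Node ((L - {x}) \<union> ((Lb - {y}) \<union> lbl d)) (cs + (kb + kids d))#}"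
    using xL b' by (simp add: graft_white)
  have "y \<in> (L - {x}) \<union> Lb" using yb by blast
  then have "graft y d (Node ((L - {x}) \<union> Lb) (cs + kb)) =
    {#Node (((L - {x}) \<union> Lb) - {y} \<union> lbl d) (cs + kb + kids d)#}"
    using d by (simp add: graft_white)
  moreover have "((L - {x}) \<union> Lb) - {y} \<union> lbl d = (L - {x}) \<union> ((Lb - {y}) \<union> lbl d)"
    using yL by blast
  ultimately show ?thesis using left right by (simp add: add.assoc)
qed

lemma graft_nested_root_red:
  assumes xL: "x \<in> L" and yL: "y \<notin> L - {x}" and ycs: "\<And>c. c \<in># cs \<Longrightarrow> y \<notin> labels c"
    and b: "b = Node Lb kb" and yb: "y \<in> Lb" and d: "red d"
  shows "graft_forest y d (graft x b (Node L cs)) = graft x (plug y d b) (Node L cs)"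
proof -
  have "\<not> red b" using b yb by auto
  then have left: "graft x b (Node L cs) = {#Node ((L - {x}) \<union> Lb) (cs + kb)#}"
    using xL b by (simp add: graft_white)
  have yN: "y \<in> (L - {x}) \<union> Lb" using yb by blast
  consider "Node L cs = Node {x} {#}" "b = Node {y} {#}"
    | "Node L cs \<noteq> Node {x} {#}" "b = Node {y} {#}"
    | "b \<noteq> Node {y} {#}"
    by auto
  then show ?thesis
  proof cases
    case 1
    then show ?thesis using left d b by (simp add: graft_red_leaf plug_leaf)
  next
    case 2
    then have "Node ((L - {x}) \<union> Lb) (cs + kb) \<noteq> Node {y} {#}" and "(L - {x}) \<union> Lb - {y} = L - {x}"
      and kb: "kb = {#}" using xL yL b by auto
    then have "graft y d (Node ((L - {x}) \<union> Lb) (cs + kb)) = {#Node (L - {x}) (cs + {#d#})#}"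
      using graft_red_attach[OF yN d] kb by simp
    moreover have "graft x (plug y d b) (Node L cs) = {#Node (L - {x}) (cs + {#d#})#}"
      using graft_red_attach[OF xL d 2(1)] 2(2) by (simp add: plug_leaf)
    ultimately show ?thesis using left by simp
  next
    case 3
    then have "graft y d b = {#Node (Lb - {y}) (kb + {#d#})#}"
      using yb d b by (simp add: graft_red_attach)
    then have b': "plug y d b = Node (Lb - {y}) (kb + {#d#})"
      using 3 by (intro plug_eqI) auto
    have "Node ((L - {x}) \<union> Lb) (cs + kb) \<noteq> Node {y} {#}"
      using 3 b xL yL by auto
    moreover have "((L - {x}) \<union> Lb) - {y} = (L - {x}) \<union> (Lb - {y})"
      using yL by blast
    ultimately show ?thesis
      using left b' d xL yN by (simp add: graft_red_attach graft_white add.assoc)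
  qed
qed

lemma graft_nested:
  "unnested x a \<Longrightarrow> y \<notin> labels a - {x} \<Longrightarrow> graft_forest y d (graft x b a) = graft x (plug y d b) a"
proof (induction a)
  case (Node L cs)
  obtain Lb kb where b: "b = Node Lb kb" by (cases b)
  show ?case
  proof (cases "x \<in> L")
    case xL: True
    have ycs: "\<And>c. c \<in># cs \<Longrightarrow> y \<notin> labels c" and yL: "y \<notin> L - {x}"
      using Node.prems xL by auto
    show ?thesis
    proof (cases "y \<in> Lb")
      case False
      with xL yL ycs b show ?thesis by (rule graft_nested_root_below)
    next
      case True
      show ?thesis
      proof (cases "red d")
        case False
        with xL yL ycs b \<open>y \<in> Lb\<close> show ?thesis by (rule graft_nested_root_white)
      next
        case True
        with xL yL ycs b \<open>y \<in> Lb\<close> show ?thesis by (rule graft_nested_root_red)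
      qed
    qed
  next
    case False
    have "graft_forest y d (graft_forest x b cs) = graft_forest x (plug y d b) cs"
      unfolding sum_mset_image_sum_mset
      by (rule arg_cong[where f=sum_mset], rule image_mset_cong) (use Node False in auto)
    moreover have "y \<notin> L" using False Node.prems by auto
    ultimately show ?thesis using False by (simp add: graft_below)
  qed
qed

lemma plug_nested:
  assumes "unnested x a" "x \<in> labels a" "y \<notin> labels a - {x}" "rw_ok b"
  shows "plug y d (plug x b a) = plug x (plug y d b) a"
proof (cases "a = Node {x} {#}")
  case True
  then show ?thesis by (simp add: plug_leaf)
next
  case False
  have "graft y d (plug x b a) = graft_forest y d (graft x b a)"
    using graft_eq_plug[of b a x] False by simp
  also have "\<dots> = graft x (plug y d b) a"
    using assms(1,3) by (rule graft_nested)
  finally have "graft y d (plug x b a) = graft x (plug y d b) a" .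
  moreover have "plug x b a \<noteq> Node {y} {#}"
    using plug_not_leaf[OF assms(4,2) False] assms(3) by blast
  ultimately show ?thesis
    using graft_eq_plug[of d "plug x b a" y] graft_eq_plug[of "plug y d b" a x] False by simp
qed

section \<open>Disjoint grafting\<close>

lemma graft_disjoint_root_white_red:
  assumes xL: "x \<in> L" and yL: "y \<in> L" and "x \<noteq> y" and yb: "y \<notin> labels b"
    and "rw_ok b" and b: "\<not> red b" and d: "red d"
  shows "graft_forest y d (graft x b (Node L cs)) = graft_forest x b (graft y d (Node L cs))"
proof -
  obtain Lb kb where b_def: "b = Node Lb kb" by (cases b)
  have yLb: "y \<notin> Lb" using yb b_def by simp
  have yN: "y \<in> (L - {x}) \<union> Lb" using yL \<open>x \<noteq> y\<close> by blast
  have "Lb = {} \<Longrightarrow> kb \<noteq> {#}" using \<open>rw_ok b\<close> b_def by auto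
  moreover have "Lb = {}" if "(L - {x}) \<union> Lb = {y}"
  proof -
    have "Lb \<subseteq> {y}" using that by (metis Un_upper2)
    then show ?thesis using yLb by auto
  qed
  ultimately have "Node ((L - {x}) \<union> Lb) (cs + kb) \<noteq> Node {y} {#}" by auto
  then have "graft y d (Node ((L - {x}) \<union> Lb) (cs + kb)) =
      {#Node (((L - {x}) \<union> Lb) - {y}) (cs + kb + {#d#})#}"
    by (rule graft_red_attach[OF yN d])
  then have left: "graft_forest y d (graft x b (Node L cs)) =
      {#Node (((L - {x}) \<union> Lb) - {y}) (cs + kb + {#d#})#}"
    using graft_white[OF xL b] b_def by simp
  have xL': "x \<in> L - {y}" using xL \<open>x \<noteq> y\<close> by blast
  then have "Node L cs \<noteq> Node {y} {#}" by auto
  then have "graft y d (Node L cs) = {#Node (L - {y}) (cs + {#d#})#}"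
    by (rule graft_red_attach[OF yL d])
  then have right: "graft_forest x b (graft y d (Node L cs)) =
      {#Node ((L - {y} - {x}) \<union> Lb) (cs + {#d#} + kb)#}"
    using graft_white[OF xL' b] b_def by simp
  have "((L - {x}) \<union> Lb) - {y} = (L - {y} - {x}) \<union> Lb" using yLb by auto
  then show ?thesis using left right by (simp add: ac_simps)
qed

lemma graft_disjoint_root_both:
  assumes xL: "x \<in> L" and yL: "y \<in> L" and xy: "x \<noteq> y"
    and yb: "y \<notin> labels b" and xd: "x \<notin> labels d" and "rw_ok b" "rw_ok d"
  shows "graft_forest y d (graft x b (Node L cs)) = graft_forest x b (graft y d (Node L cs))"
proof -
  have xL': "x \<in> L - {y}" and yL': "y \<in> L - {x}" using xL yL xy by auto
  consider "\<not> red b" "\<not> red d" | "\<not> red b" "red d" | "red b" "\<not> red d" | "red b" "red d"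
    by blast
  then show ?thesis
  proof cases
    case 1
    have "y \<notin> lbl b" using yb by (cases b) simp
    moreover have "x \<notin> lbl d" using xd by (cases d) simp
    ultimately have "((L - {x}) \<union> lbl b) - {y} \<union> lbl d = ((L - {y}) \<union> lbl d) - {x} \<union> lbl b"
      by blast
    moreover have "y \<in> (L - {x}) \<union> lbl b" "x \<in> (L - {y}) \<union> lbl d" using xL' yL' by blast+
    ultimately show ?thesis using 1 xL yL by (simp add: graft_white add.assoc add.commute)
  next
    case 2
    with xL yL xy yb \<open>rw_ok b\<close> show ?thesis by (intro graft_disjoint_root_white_red)
  next
    case 3
    with yL xL xy xd \<open>rw_ok d\<close> show ?thesis by (intro graft_disjoint_root_white_red[symmetric]) auto
  next
    case 4
    have "Node L cs \<noteq> Node {x} {#}" "Node L cs \<noteq> Node {y} {#}" using xL' yL' by auto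
    moreover have "L - {x} - {y} = L - {y} - {x}" by blast
    ultimately show ?thesis
      using 4 xL yL xL' yL' by (simp add: graft_red_attach add.assoc add.commute)
  qed
qed

lemma graft_disjoint_root_one:
  assumes xL: "x \<in> L" and yL: "y \<notin> L" and yb: "y \<notin> labels b" and "rw_ok d"
  shows "graft_forest y d (graft x b (Node L cs)) = graft_forest x b (graft y d (Node L cs))"
proof -
  obtain Lb kb where b_def: "b = Node Lb kb" by (cases b)
  have yLb: "y \<notin> Lb" and kb: "graft_forest y d kb = kb"
    using yb b_def by (auto intro: graft_forest_absent)
  have right: "graft_forest x b (graft y d (Node L cs)) = graft x b (Node L (graft_forest y d cs))"
    using yL by (simp add: graft_below)
  consider "\<not> red b" | "red b" "Node L cs = Node {x} {#}" | "red b" "Node L cs \<noteq> Node {x} {#}"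
    by blast
  then show ?thesis
  proof cases
    case 1
    have "y \<notin> (L - {x}) \<union> Lb" using yL yLb by blast
    then show ?thesis using 1 xL right b_def kb by (simp add: graft_white graft_below)
  next
    case 2
    then show ?thesis using right b_def kb by (simp add: graft_red_leaf)
  next
    case 3
    have "graft_forest y d cs \<noteq> {#} \<or> L \<noteq> {x}"
      using 3(2) graft_forest_nonempty[OF \<open>rw_ok d\<close>, of cs y] by auto
    then have "Node L (graft_forest y d cs) \<noteq> Node {x} {#}" by (metis rwt.inject)
    moreover have "y \<notin> L - {x}" using yL by blast
    ultimately show ?thesis
      using 3 xL right graft_absent[OF yb] by (simp add: graft_red_attach graft_below)
  qed
qed

lemma graft_disjoint:
  "x \<noteq> y \<Longrightarrow> y \<notin> labels b \<Longrightarrow> x \<notin> labels d \<Longrightarrow> rw_ok b \<Longrightarrow> rw_ok d \<Longrightarrow>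
   graft_forest y d (graft x b a) = graft_forest x b (graft y d a)"
proof (induction a)
  case (Node L cs)
  consider "x \<in> L" "y \<in> L" | "x \<in> L" "y \<notin> L" | "x \<notin> L" "y \<in> L" | "x \<notin> L" "y \<notin> L"
    by blast
  then show ?case
  proof cases
    case 1
    with Node.prems show ?thesis by (intro graft_disjoint_root_both)
  next
    case 2
    with Node.prems show ?thesis by (intro graft_disjoint_root_one)
  next
    case 3
    with Node.prems show ?thesis by (intro graft_disjoint_root_one[symmetric])
  next
    case 4
    have "graft_forest y d (graft_forest x b cs) = graft_forest x b (graft_forest y d cs)"
      unfolding sum_mset_image_sum_mset
      by (rule arg_cong[where f=sum_mset], rule image_mset_cong) (use Node in auto)
    with 4 show ?thesis by (simp add: graft_below)
  qed
qed

lemma plug_disjoint: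
  assumes "x \<noteq> y" "x \<in> labels a" "y \<in> labels a" "y \<notin> labels b" "x \<notin> labels d" "rw_ok b" "rw_ok d"
  shows "plug y d (plug x b a) = plug x b (plug y d a)"
proof -
  have ax: "a \<noteq> Node {x} {#}" and ay: "a \<noteq> Node {y} {#}" using assms(1-3) by auto
  have bx: "plug x b a \<noteq> Node {y} {#}" using plug_not_leaf[OF assms(6,2) ax] assms(4) by blast
  have dy: "plug y d a \<noteq> Node {x} {#}" using plug_not_leaf[OF assms(7,3) ay] assms(5) by blast
  have "graft y d (plug x b a) = graft_forest y d (graft x b a)"
    using graft_eq_plug[of b a x] ax by simp
  also have "\<dots> = graft_forest x b (graft y d a)"
    using assms(1,4-7) by (rule graft_disjoint)
  also have "\<dots> = graft x b (plug y d a)"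
    using graft_eq_plug[of d a y] ay by simp
  finally show ?thesis
    using graft_eq_plug[of d "plug x b a" y] graft_eq_plug[of b "plug y d a" x] bx dy by simp
qed

lemma relab_sel: "lbl (relab f T) = f ` lbl T" "kids (relab f T) = image_mset (relab f) (kids T)"
  by (cases T; simp)+

lemma graft_relab_root:
  assumes xL: "x \<in> L" and xcs: "\<forall>c\<in>#cs. x \<notin> labels c"
    and kf: "\<forall>z\<in>labels (Node L cs) - {x}. k z = f z" and kg: "\<forall>z\<in>labels S. k z = g z"
    and fx: "f x \<notin> f ` (labels (Node L cs) - {x})"
  shows "image_mset (relab k) (graft x S (Node L cs)) = graft (f x) (relab g S) (relab f (Node L cs))"
proof -
  have kS: "relab k S = relab g S" using kg by (auto intro: relab_cong)
  have k_lbl: "k ` lbl S = lbl (relab g S)" and k_kids: "image_mset (relab k) (kids S) = kids (relab g S)"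
    using kS by (metis relab_sel)+
  have kcs: "image_mset (relab k) cs = image_mset (relab f) cs"
    using kf xcs by (auto intro!: image_mset_cong relab_cong)
  have "f z \<noteq> f x" if "z \<in> L" "z \<noteq> x" for z
  proof -
    have "f z \<in> f ` (labels (Node L cs) - {x})" using that by simp
    then show ?thesis using fx by metis
  qed
  then have "f ` (L - {x}) = f ` L - {f x}" using xL by auto
  moreover have "k ` (L - {x}) = f ` (L - {x})" using kf by (auto intro!: image_cong)
  ultimately have kL: "k ` (L - {x}) = f ` L - {f x}" by simp
  have fxL: "f x \<in> f ` L" using xL by simp
  have leaf: "Node (f ` L) (image_mset (relab f) cs) = Node {f x} {#} \<longleftrightarrow> Node L cs = Node {x} {#}"
    using kL xL by auto
  consider "\<not> red S" | "red S" "Node L cs = Node {x} {#}" | "red S" "Node L cs \<noteq> Node {x} {#}"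
    by blast
  then show ?thesis
  proof cases
    case 1
    then show ?thesis
      using graft_white[OF xL 1] graft_white[OF fxL, of "relab g S"] kcs kL k_lbl k_kids
      by (simp add: image_Un)
  next
    case 2
    then show ?thesis using k_kids by (simp add: graft_red_leaf)
  next
    case 3
    have "red (relab g S)" using 3(1) by simp
    moreover have "Node (f ` L) (image_mset (relab f) cs) \<noteq> Node {f x} {#}" using leaf 3(2) by simp
    ultimately show ?thesis
      using graft_red_attach[OF xL 3] graft_red_attach[OF fxL] kcs kL kS by simp
  qed
qed

lemma graft_relab:
  "unnested x T \<Longrightarrow> \<forall>z\<in>labels T - {x}. k z = f z \<Longrightarrow> \<forall>z\<in>labels S. k z = g z \<Longrightarrow>
   f x \<notin> f ` (labels T - {x}) \<Longrightarrow>
   image_mset (relab k) (graft x S T) = graft (f x) (relab g S) (relab f T)"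
proof (induction T)
  case (Node L cs)
  show ?case
  proof (cases "x \<in> L")
    case True
    with Node.prems show ?thesis by (intro graft_relab_root) auto
  next
    case False
    have fxL: "f x \<notin> f ` L" using Node.prems(4) False by auto
    have kL: "k ` L = f ` L" using Node.prems(2) False by (auto intro!: image_cong)
    have "image_mset (relab k) (graft_forest x S cs) = graft_forest (f x) (relab g S) (image_mset (relab f) cs)"
      unfolding image_mset_sum_mset multiset.map_comp comp_def
    proof (rule arg_cong[where f=sum_mset], rule image_mset_cong)
      fix c assume c: "c \<in># cs"
      have "labels c - {x} \<subseteq> labels (Node L cs) - {x}" using c by auto
      with Node.prems False c show "image_mset (relab k) (graft x S c) = graft (f x) (relab g S) (relab f c)"
        by (intro Node.IH) auto
    qed
    then show ?thesis using False fxL kL by (simp add: graft_below)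
  qed
qed

lemma relab_plug:
  assumes "unnested x T" "x \<in> labels T" "\<forall>z\<in>labels T - {x}. k z = f z" "\<forall>z\<in>labels S. k z = g z"
    "f x \<notin> f ` (labels T - {x})"
  shows "relab k (plug x S T) = plug (f x) (relab g S) (relab f T)"
proof (cases "red S \<and> T = Node {x} {#}")
  case True
  then show ?thesis using assms(4) by (auto simp: plug_def intro: relab_cong)
next
  case False
  have "relab f T \<noteq> Node {f x} {#}" if "red S"
  proof
    assume leaf: "relab f T = Node {f x} {#}"
    obtain L cs where T: "T = Node L cs" by (cases T)
    then have "cs = {#}" "f ` L = {f x}" using leaf by simp_all
    moreover have "L \<noteq> {x}" using False that T \<open>cs = {#}\<close> by simp
    moreover have "x \<in> L" using assms(2) T \<open>cs = {#}\<close> by simp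
    ultimately obtain z where z: "z \<in> L" "z \<noteq> x" by blast
    then have "f z = f x" using \<open>f ` L = {f x}\<close> by blast
    moreover have "z \<in> labels T - {x}" using z T by simp
    ultimately have "f x \<in> f ` (labels T - {x})" by (metis image_eqI)
    then show False using assms(5) by simp
  qed
  then have "graft (f x) (relab g S) (relab f T) = {#plug (f x) (relab g S) (relab f T)#}"
    by (intro graft_eq_plug) auto
  moreover have "image_mset (relab k) (graft x S T) = {#relab k (plug x S T)#}"
    using graft_eq_plug[OF False] by simp
  ultimately show ?thesis using graft_relab[OF assms(1,3-5)] by simp
qed

lemma relab_plug_inj:
  "inj f \<Longrightarrow> unnested x T \<Longrightarrow> x \<in> labels T \<Longrightarrow> relab f (plug x S T) = plug (f x) (relab f S) (relab f T)"
  by (rule relab_plug) (auto dest: injD)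

lemma filter_mset_neq_absent: "x \<notin># M \<Longrightarrow> filter_mset (\<lambda>y. y \<noteq> x) M = M"
  by (induction M) auto

lemma labm_graft_root:
  assumes xL: "x \<in> L" and "finite L" and "rw_ok S" and disj: "L \<inter> labels S \<subseteq> {x}"
  shows "(\<Sum>t\<in>#graft x S (Node L cs). labm t) = mset_set (L - {x}) + (\<Sum>c\<in>#cs. labm c) + labm S"
proof -
  obtain Ls ks where S: "S = Node Ls ks" by (cases S)
  consider "\<not> red S" | "red S" "Node L cs = Node {x} {#}" | "red S" "Node L cs \<noteq> Node {x} {#}"
    by auto
  then show ?thesis
  proof cases
    case 1
    have "(L - {x}) \<inter> Ls = {}" "finite Ls" using disj \<open>rw_ok S\<close> S by auto
    then have "mset_set ((L - {x}) \<union> Ls) = mset_set (L - {x}) + mset_set Ls"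
      using \<open>finite L\<close> by (intro mset_set_Union) auto
    moreover have "graft x S (Node L cs) = {#Node ((L - {x}) \<union> Ls) (cs + ks)#}"
      using graft_white[OF xL 1] S by simp
    ultimately show ?thesis using S by (simp add: add_ac)
  next
    case 2
    then show ?thesis using S by (simp add: graft_red_leaf)
  next
    case 3
    then show ?thesis using graft_red_attach[OF xL 3] by (simp add: add_ac)
  qed
qed

lemma labm_graft:
  "rw_ok T \<Longrightarrow> rw_ok S \<Longrightarrow> unnested x T \<Longrightarrow> labels T \<inter> labels S \<subseteq> {x} \<Longrightarrow>
   (\<Sum>t\<in>#graft x S T. labm t) = filter_mset (\<lambda>y. y \<noteq> x) (labm T) + repeat_mset (count (labm T) x) (labm S)"
proof (induction T)
  case (Node L cs)
  have fin: "finite L" using Node.prems(1) by simp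
  show ?case
  proof (cases "x \<in> L")
    case True
    have notin: "x \<notin># labm c" if "c \<in># cs" for c
      using Node.prems(1,3) True that set_mset_labm[of c] by auto
    have cs: "x \<notin># (\<Sum>c\<in>#cs. labm c)"
    proof
      assume "x \<in># (\<Sum>c\<in>#cs. labm c)"
      then obtain c where "c \<in># cs" "x \<in># labm c" by (auto simp: in_Union_mset_iff)
      with notin show False by blast
    qed
    have "count (\<Sum>c\<in>#cs. labm c) x = 0" using cs by (rule count_eq_zero_iff[THEN iffD2])
    then have "count (labm (Node L cs)) x = 1" using fin True by simp
    moreover have "filter_mset (\<lambda>y. y \<noteq> x) (\<Sum>c\<in>#cs. labm c) = (\<Sum>c\<in>#cs. labm c)"
      using cs by (rule filter_mset_neq_absent)
    moreover have "filter_mset (\<lambda>y. y \<noteq> x) (mset_set L) = mset_set (L - {x})"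
      using fin by (simp add: set_diff_eq)
    moreover have "L \<inter> labels S \<subseteq> {x}" using Node.prems(4) by auto
    ultimately show ?thesis using labm_graft_root[OF True fin Node.prems(2)] by simp
  next
    case False
    have "(\<Sum>t\<in>#graft x S c. labm t) =
       filter_mset (\<lambda>y. y \<noteq> x) (labm c) + repeat_mset (count (labm c) x) (labm S)" if "c \<in># cs" for c
      using Node.prems False that by (intro Node.IH) auto
    then have "(\<Sum>t\<in>#graft_forest x S cs. labm t) =
       (\<Sum>c\<in>#cs. filter_mset (\<lambda>y. y \<noteq> x) (labm c) + repeat_mset (count (labm c) x) (labm S))"
      unfolding sum_mset_image_sum_mset by (intro arg_cong[where f=sum_mset] image_mset_cong) auto
    also have "\<dots> = filter_mset (\<lambda>y. y \<noteq> x) (\<Sum>c\<in>#cs. labm c) +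
        repeat_mset (count (\<Sum>c\<in>#cs. labm c) x) (labm S)"
      by (induction cs) (simp_all add: repeat_mset_distrib ac_simps)
    finally have forest: "(\<Sum>t\<in>#graft_forest x S cs. labm t) = filter_mset (\<lambda>y. y \<noteq> x) (\<Sum>c\<in>#cs. labm c) +
        repeat_mset (count (\<Sum>c\<in>#cs. labm c) x) (labm S)" .
    have "filter_mset (\<lambda>y. y \<noteq> x) (mset_set L) = mset_set L"
      using False fin by (simp add: filter_mset_neq_absent)
    with forest show ?thesis using False fin by (simp add: graft_below ac_simps)
  qed
qed

definition rw_tree_on :: "rwt \<Rightarrow> nat set \<Rightarrow> bool" where
  "rw_tree_on T A \<longleftrightarrow> rw_ok T \<and> finite A \<and> labm T = mset_set A"

lemma RW_iff_rw_tree_on: "T \<in> RW n \<longleftrightarrow> rw_tree_on T {1..n}"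
  by (simp add: RW_def rw_tree_on_def)

lemma labels_rw_tree_on: "rw_tree_on T A \<Longrightarrow> labels T = A"
  by (metis finite_set_mset_mset_set rw_tree_on_def set_mset_labm)

lemma arity_rw_tree_on: "rw_tree_on T A \<Longrightarrow> arity T = card A"
  by (simp add: rw_tree_on_def arity_def)

lemma unnested_if_count_le_1: "rw_ok T \<Longrightarrow> count (labm T) x \<le> 1 \<Longrightarrow> unnested x T"
proof (induction T)
  case (Node L cs)
  have child: "count (labm c) x \<le> count (\<Sum>c\<in>#cs. labm c) x" if "c \<in># cs" for c
    using that by (auto dest!: multi_member_split)
  show ?case
  proof (cases "x \<in> L")
    case True
    then have "count (\<Sum>c\<in>#cs. labm c) x = 0" using Node.prems by simp
    then have "x \<notin># labm c" if "c \<in># cs" for c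
      using child[OF that] by (simp add: not_in_iff)
    then have "x \<notin> labels c" if "c \<in># cs" for c
      using that Node.prems(1) set_mset_labm[of c] by auto
    then show ?thesis using True by simp
  next
    case False
    have "unnested x c" if "c \<in># cs" for c
      using Node.prems child[OF that] that by (intro Node.IH) auto
    then show ?thesis using False by simp
  qed
qed

lemma unnested_rw_tree_on: "rw_tree_on T A \<Longrightarrow> unnested x T"
  by (rule unnested_if_count_le_1) (auto simp: rw_tree_on_def count_mset_set')

lemma rw_tree_on_relab:
  assumes "rw_tree_on T A" "inj_on f A"
  shows "rw_tree_on (relab f T) (f ` A)"
proof -
  have "rw_ok T" "labels T = A" using assms(1) labels_rw_tree_on by (auto simp: rw_tree_on_def)
  then have "labm (relab f T) = image_mset f (labm T)"
    using assms(2) by (intro labm_relab) auto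
  then show ?thesis using assms by (simp add: rw_tree_on_def rw_ok_relab image_mset_mset_set)
qed

lemma rw_tree_on_permute: "\<sigma> permutes A \<Longrightarrow> rw_tree_on T A \<Longrightarrow> rw_tree_on (relab \<sigma> T) A"
  using rw_tree_on_relab[OF _ permutes_inj_on] permutes_image by metis

lemma rw_tree_on_plug:
  assumes T: "rw_tree_on T A" and S: "rw_tree_on S B" and x: "x \<in> A" and disj: "A \<inter> B \<subseteq> {x}"
  shows "rw_tree_on (plug x S T) ((A - {x}) \<union> B)"
proof (cases "red S \<and> T = Node {x} {#}")
  case True
  then have "A = {x}" using labels_rw_tree_on[OF T] by simp
  then show ?thesis using True S by (simp add: plug_def)
next
  case False
  have ok: "rw_ok T" "rw_ok S" using T S by (auto simp: rw_tree_on_def)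
  have graft: "graft x S T = {#plug x S T#}" using False by (rule graft_eq_plug)
  have "labels T \<inter> labels S \<subseteq> {x}"
    using disj by (simp add: labels_rw_tree_on[OF T] labels_rw_tree_on[OF S])
  then have "(\<Sum>t\<in>#graft x S T. labm t) =
      filter_mset (\<lambda>y. y \<noteq> x) (labm T) + repeat_mset (count (labm T) x) (labm S)"
    by (rule labm_graft[OF ok unnested_rw_tree_on[OF T]])
  then have "labm (plug x S T) =
      filter_mset (\<lambda>y. y \<noteq> x) (labm T) + repeat_mset (count (labm T) x) (labm S)"
    using graft by simp
  also have "\<dots> = mset_set (A - {x}) + mset_set B"
    using T S x by (simp add: rw_tree_on_def set_diff_eq)
  also have "\<dots> = mset_set ((A - {x}) \<union> B)"
    using T S disj by (intro mset_set_Union[symmetric]) (auto simp: rw_tree_on_def)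
  finally show ?thesis
    using rw_ok_graft[OF ok(2,1), of "plug x S T" x] graft T S by (simp add: rw_tree_on_def)
qed

section \<open>The operad axioms\<close>

definition shift_after :: "nat \<Rightarrow> nat \<Rightarrow> nat \<Rightarrow> nat" where
  "shift_after x n = (\<lambda>y. if x < y then y + n - 1 else y)"

definition offset :: "nat \<Rightarrow> nat \<Rightarrow> nat" where
  "offset x = (\<lambda>y. y + x - 1)"

lemma rw_comp_eq_plug: "rw_comp a x b = plug x (relab (offset x) b) (relab (shift_after x (arity b)) a)"
  by (simp add: rw_comp_def plug_def Let_def offset_def shift_after_def)

lemma inj_shift_after: "1 \<le> n \<Longrightarrow> inj (shift_after x n)"
  by (auto simp: inj_on_def shift_after_def split: if_splits)

lemma inj_offset: "1 \<le> x \<Longrightarrow> inj (offset x)"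
  by (auto simp: inj_on_def offset_def)

lemma shift_after_image:
  assumes "1 \<le> x" "x \<le> m" "1 \<le> n"
  shows "shift_after x n ` {1..m} = {1..x} \<union> {x + n..m + n - 1}"
proof (intro equalityI subsetI)
  fix y assume "y \<in> {1..x} \<union> {x + n..m + n - 1}"
  then have "y \<le> x \<and> y = shift_after x n y \<and> y \<in> {1..m} \<or>
             \<not> y \<le> x \<and> y = shift_after x n (y - n + 1) \<and> y - n + 1 \<in> {1..m}"
    using assms by (auto simp: shift_after_def)
  then show "y \<in> shift_after x n ` {1..m}" by blast
qed (use assms in \<open>auto simp: shift_after_def\<close>)

lemma offset_image: "1 \<le> x \<Longrightarrow> offset x ` {1..n} = {x..x + n - 1}"
proof (intro equalityI subsetI)
  fix y assume "1 \<le> x" "y \<in> {x..x + n - 1}"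
  then have "y = offset x (y - x + 1)" "y - x + 1 \<in> {1..n}" by (auto simp: offset_def)
  then show "y \<in> offset x ` {1..n}" by blast
qed (auto simp: offset_def)

lemma rw_comp_closed:
  assumes a: "rw_tree_on a {1..m}" and b: "rw_tree_on b {1..n}" and x: "1 \<le> x" "x \<le> m" and n: "1 \<le> n"
  shows "rw_tree_on (rw_comp a x b) {1..m + n - 1}"
proof -
  have A: "rw_tree_on (relab (shift_after x n) a) ({1..x} \<union> {x + n..m + n - 1})"
    using rw_tree_on_relab[OF a inj_on_subset[OF inj_shift_after[OF n, of x] subset_UNIV]] shift_after_image[OF x n]
    by simp
  have B: "rw_tree_on (relab (offset x) b) {x..x + n - 1}"
    using rw_tree_on_relab[OF b inj_on_subset[OF inj_offset[OF x(1)] subset_UNIV]] offset_image[OF x(1)]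
    by simp
  have "rw_tree_on (plug x (relab (offset x) b) (relab (shift_after x n) a))
      ((({1..x} \<union> {x + n..m + n - 1}) - {x}) \<union> {x..x + n - 1})"
    by (rule rw_tree_on_plug[OF A B]) (use x n in auto)
  moreover have "(({1..x} \<union> {x + n..m + n - 1}) - {x}) \<union> {x..x + n - 1} = {1..m + n - 1}"
    using x n by auto
  ultimately show ?thesis using arity_rw_tree_on[OF b] by (simp add: rw_comp_eq_plug)
qed

lemma rw_comp_unit_left: "rw_comp rw_unit 1 a = a"
proof -
  have "relab (shift_after 1 (arity a)) (Node {1} {#}) = Node {1} {#}" by (simp add: shift_after_def)
  moreover have "relab (offset 1) a = a" using relab_ident by (simp add: offset_def)
  ultimately show ?thesis by (simp add: rw_comp_eq_plug rw_unit_def plug_leaf)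
qed

lemma rw_comp_unit_right: "1 \<le> x \<Longrightarrow> rw_comp a x rw_unit = a"
proof -
  assume x: "1 \<le> x"
  have "shift_after x 1 = (\<lambda>y. y)" by (rule ext) (simp add: shift_after_def)
  then have "relab (shift_after x 1) a = a" using relab_ident by simp
  moreover have "relab (offset x) (Node {1} {#}) = Node {x} {#}" using x by (simp add: offset_def)
  moreover have "plug x (Node {x} {#}) a = a" by (simp add: plug_def graft_unit)
  ultimately show ?thesis by (simp add: rw_comp_eq_plug rw_unit_def arity_def)
qed

lemma rw_tree_on_shift_after:
  "rw_tree_on a {1..m} \<Longrightarrow> 1 \<le> n \<Longrightarrow> rw_tree_on (relab (shift_after x n) a) (shift_after x n ` {1..m})"
  using rw_tree_on_relab inj_on_subset[OF inj_shift_after subset_UNIV] by blast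

lemma shift_after_comp_shift_after:
  "1 \<le> x \<Longrightarrow> 1 \<le> y \<Longrightarrow> y \<le> n \<Longrightarrow> 1 \<le> k \<Longrightarrow> shift_after (x + y - 1) k \<circ> shift_after x n = shift_after x (n + k - 1)"
  by (rule ext) (auto simp: shift_after_def)

lemma shift_after_comp_offset:
  "1 \<le> x \<Longrightarrow> 1 \<le> k \<Longrightarrow> shift_after (x + y - 1) k \<circ> offset x = offset x \<circ> shift_after y k"
  by (rule ext) (auto simp: shift_after_def offset_def)

lemma offset_comp_offset: "1 \<le> x \<Longrightarrow> 1 \<le> y \<Longrightarrow> offset x \<circ> offset y = offset (x + y - 1)"
  by (rule ext) (auto simp: offset_def)

lemma shift_after_comp_commute:
  "x < y \<Longrightarrow> 1 \<le> n \<Longrightarrow> 1 \<le> k \<Longrightarrow> shift_after (y + n - 1) k \<circ> shift_after x n = shift_after x n \<circ> shift_after y k"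
  by (rule ext) (auto simp: shift_after_def)

lemma relab_rw_comp:
  assumes a: "rw_tree_on a {1..m}" and b: "rw_tree_on b {1..n}" and x: "1 \<le> x" "x \<le> m" and n: "1 \<le> n"
    and "inj f"
  shows "relab f (rw_comp a x b) = plug (f x) (relab (f \<circ> offset x) b) (relab (f \<circ> shift_after x n) a)"
proof -
  have T: "rw_tree_on (relab (shift_after x n) a) (shift_after x n ` {1..m})"
    using rw_tree_on_shift_after[OF a n] .
  have "x \<in> labels (relab (shift_after x n) a)"
    using labels_rw_tree_on[OF T] x by (auto simp: shift_after_def)
  then show ?thesis
    using relab_plug_inj[OF \<open>inj f\<close> unnested_rw_tree_on[OF T]] arity_rw_tree_on[OF b]
    by (simp add: rw_comp_eq_plug relab_relab)
qed

lemma rw_comp_assoc_nested: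
  assumes a: "rw_tree_on a {1..m}" and b: "rw_tree_on b {1..n}" and d: "rw_tree_on d {1..k}"
    and x: "1 \<le> x" "x \<le> m" and y: "1 \<le> y" "y \<le> n" and k: "1 \<le> k"
  shows "rw_comp (rw_comp a x b) (x + y - 1) d = rw_comp a x (rw_comp b y d)"
proof -
  define Y where "Y = x + y - 1"
  define a' where "a' = relab (shift_after x (n + k - 1)) a"
  define b' where "b' = relab (offset x \<circ> shift_after y k) b"
  define d' where "d' = relab (offset Y) d"
  have n: "1 \<le> n" and nk: "1 \<le> n + k - 1" using y k by simp_all
  have "shift_after Y k x = x" "offset x y = Y" using y by (simp_all add: shift_after_def offset_def Y_def)
  then have "relab (shift_after Y k) (rw_comp a x b) = plug x b' a'"
    "relab (offset x) (rw_comp b y d) = plug Y d' b'"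
    using relab_rw_comp[OF a b x n inj_shift_after[OF k, of Y]] relab_rw_comp[OF b d y k inj_offset[OF x(1)]]
    unfolding a'_def b'_def d'_def Y_def shift_after_comp_offset[OF x(1) k]
      shift_after_comp_shift_after[OF x(1) y k] offset_comp_offset[OF x(1) y(1)]
    by simp_all
  moreover have "arity d = k" "arity (rw_comp b y d) = n + k - 1"
    using arity_rw_tree_on d rw_comp_closed[OF b d y k] by auto
  ultimately have "rw_comp (rw_comp a x b) Y d = plug Y d' (plug x b' a')"
    "rw_comp a x (rw_comp b y d) = plug x (plug Y d' b') a'"
    by (simp_all only: rw_comp_eq_plug[of _ Y d] rw_comp_eq_plug[of a x] d'_def a'_def)
  moreover have A': "rw_tree_on a' (shift_after x (n + k - 1) ` {1..m})"
    unfolding a'_def using rw_tree_on_shift_after[OF a nk] .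
  moreover have "x \<in> labels a'" "Y \<notin> labels a' - {x}"
    using labels_rw_tree_on[OF A'] x y k by (auto simp: shift_after_def Y_def)
  moreover have "rw_ok b'" using b by (simp add: b'_def rw_tree_on_def rw_ok_relab)
  ultimately show ?thesis using plug_nested[OF unnested_rw_tree_on[OF A']] by (simp add: Y_def)
qed

lemma rw_comp_assoc_disjoint:
  assumes a: "rw_tree_on a {1..m}" and b: "rw_tree_on b {1..n}" and d: "rw_tree_on d {1..k}"
    and x: "1 \<le> x" "x < y" "y \<le> m" and n: "1 \<le> n" and k: "1 \<le> k"
  shows "rw_comp (rw_comp a x b) (y + n - 1) d = rw_comp (rw_comp a y d) x b"
proof -
  define Y where "Y = y + n - 1"
  define a' where "a' = relab (shift_after Y k \<circ> shift_after x n) a"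
  define b' where "b' = relab (offset x) b"
  define d' where "d' = relab (offset Y) d"
  have "relab (shift_after Y k \<circ> offset x) b = b'" "relab (shift_after x n \<circ> offset y) d = d'"
    using labels_rw_tree_on[OF b] labels_rw_tree_on[OF d] x n unfolding b'_def d'_def
    by (auto intro!: relab_cong simp: shift_after_def offset_def Y_def)
  moreover have "shift_after Y k x = x" "shift_after x n y = Y"
    using x by (simp_all add: shift_after_def Y_def)
  ultimately have "relab (shift_after Y k) (rw_comp a x b) = plug x b' a'"
    "relab (shift_after x n) (rw_comp a y d) = plug Y d' a'"
    using relab_rw_comp[OF a b x(1) _ n inj_shift_after[OF k, of Y]] relab_rw_comp[OF a d _ x(3) k inj_shift_after[OF n, of x]] x
    unfolding a'_def Y_def shift_after_comp_commute[OF x(2) n k] by simp_all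
  moreover have "arity b = n" "arity d = k" using arity_rw_tree_on b d by auto
  ultimately have "rw_comp (rw_comp a x b) Y d = plug Y d' (plug x b' a')"
    "rw_comp (rw_comp a y d) x b = plug x b' (plug Y d' a')"
    by (simp_all add: rw_comp_eq_plug[of _ Y d] rw_comp_eq_plug[of _ x b] b'_def d'_def)
  moreover have A': "rw_tree_on a' ((shift_after Y k \<circ> shift_after x n) ` {1..m})"
    unfolding a'_def
    using rw_tree_on_relab[OF a inj_on_subset[OF inj_compose[OF inj_shift_after[OF k] inj_shift_after[OF n]]]]
    by simp
  moreover have "x \<in> labels a'" "Y \<in> labels a'" "x \<noteq> Y"
    using labels_rw_tree_on[OF A'] x n by (force simp: shift_after_def Y_def)+
  moreover have "Y \<notin> labels b'" "x \<notin> labels d'"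
    using labels_rw_tree_on[OF b] labels_rw_tree_on[OF d] x n by (auto simp: b'_def d'_def offset_def Y_def)
  moreover have "rw_ok b'" "rw_ok d'" using b d by (auto simp: b'_def d'_def rw_tree_on_def rw_ok_relab)
  ultimately show ?thesis using plug_disjoint by (simp add: Y_def)
qed

lemma block_perm_shift_after:
  assumes \<sigma>: "\<sigma> permutes {1..m}" and x: "1 \<le> x" "x \<le> m" and z: "1 \<le> z" "z \<le> m" "z \<noteq> x"
    and n: "1 \<le> n"
  shows "block_perm m n x \<sigma> \<tau> (shift_after x n z) = shift_after (\<sigma> x) n (\<sigma> z)"
proof -
  have "\<sigma> z \<noteq> \<sigma> x" using permutes_inj[OF \<sigma>] z(3) by (auto simp: inj_def)
  then show ?thesis
    using x z n by (cases "z < x") (auto simp: block_perm_def Let_def shift_after_def)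
qed

lemma block_perm_offset:
  "1 \<le> x \<Longrightarrow> x \<le> m \<Longrightarrow> 1 \<le> z \<Longrightarrow> z \<le> n \<Longrightarrow> block_perm m n x \<sigma> \<tau> (offset x z) = offset (\<sigma> x) (\<tau> z)"
  by (auto simp: block_perm_def Let_def offset_def)

lemma rw_comp_equivariant:
  assumes a: "rw_tree_on a {1..m}" and b: "rw_tree_on b {1..n}"
    and \<sigma>: "\<sigma> permutes {1..m}" and \<tau>: "\<tau> permutes {1..n}" and x: "1 \<le> x" "x \<le> m" and n: "1 \<le> n"
  shows "rw_comp (relab \<sigma> a) (\<sigma> x) (relab \<tau> b) = relab (block_perm m n x \<sigma> \<tau>) (rw_comp a x b)"
proof -
  define \<beta> where "\<beta> = block_perm m n x \<sigma> \<tau>"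
  define T where "T = relab (shift_after x n) a"
  txt \<open>\<open>\<beta>\<close> moves the grafting label \<open>x\<close> into the block of \<open>b\<close>; as a grafting position it has to
    go to \<open>\<sigma> x\<close> instead.\<close>
  define f where "f = (\<lambda>z. if z = x then \<sigma> x else \<beta> z)"
  have arity_eqs: "arity b = n" "arity (relab \<tau> b) = n"
    using arity_rw_tree_on b rw_tree_on_relab[OF b permutes_inj_on[OF \<tau>]] permutes_image[OF \<tau>] by auto
  have T: "rw_tree_on T (shift_after x n ` {1..m})"
    unfolding T_def using rw_tree_on_shift_after[OF a n] .
  have fixed: "shift_after x n x = x" by (simp add: shift_after_def)
  then have xT: "x \<in> labels T" using labels_rw_tree_on[OF T] x by force
  have f_shift: "f (shift_after x n z) = shift_after (\<sigma> x) n (\<sigma> z)" if "1 \<le> z" "z \<le> m" for z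
  proof (cases "z = x")
    case False
    then have "shift_after x n z \<noteq> x" using injD[OF inj_shift_after[OF n]] fixed by metis
    then show ?thesis using block_perm_shift_after[OF \<sigma> x that False n] by (simp add: f_def \<beta>_def)
  qed (simp add: f_def shift_after_def)
  have "f x \<notin> f ` (labels T - {x})"
  proof
    assume "f x \<in> f ` (labels T - {x})"
    then obtain u where "u \<in> labels T - {x}" "f u = f x" by (metis imageE)
    then have u: "u \<in> labels T" "u \<noteq> x" "f u = \<sigma> x" by (simp_all add: f_def)
    then obtain z where z: "z \<in> {1..m}" "u = shift_after x n z" using labels_rw_tree_on[OF T] by auto
    then have "z \<noteq> x" using u(2) fixed by auto
    then have "\<sigma> z \<noteq> \<sigma> x" using permutes_inj[OF \<sigma>] by (auto simp: inj_def)
    moreover have "shift_after (\<sigma> x) n (\<sigma> z) = \<sigma> x" using f_shift z u(3) by simp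
    ultimately show False using n by (simp add: shift_after_def split: if_splits)
  qed
  then have "relab \<beta> (plug x (relab (offset x) b) T) = plug (f x) (relab \<beta> (relab (offset x) b)) (relab f T)"
    by (intro relab_plug[OF unnested_rw_tree_on[OF T] xT]) (auto simp: f_def)
  moreover have "relab \<beta> (relab (offset x) b) = relab (offset (\<sigma> x)) (relab \<tau> b)"
    unfolding relab_relab using labels_rw_tree_on[OF b] block_perm_offset[OF x]
    by (intro relab_cong) (auto simp: \<beta>_def)
  moreover have "relab f T = relab (shift_after (\<sigma> x) n) (relab \<sigma> a)"
    unfolding T_def relab_relab using labels_rw_tree_on[OF a] f_shift by (intro relab_cong) auto
  ultimately show ?thesis by (simp add: rw_comp_eq_plug arity_eqs T_def \<beta>_def f_def)
qed

theorem mainTheorem5: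
  shows "sym_set_operad RW rw_comp rw_act rw_unit"
proof -
  have "rw_unit \<in> RW 1" by (simp add: RW_def rw_unit_def)
  then show ?thesis
    unfolding sym_set_operad_def ns_set_operad_def
    by (intro conjI allI impI)
      (auto intro: rw_tree_on_permute rw_comp_closed rw_comp_unit_right rw_comp_assoc_nested
        rw_comp_assoc_disjoint rw_comp_equivariant
        simp: RW_iff_rw_tree_on rw_act_def rw_comp_unit_left relab_relab relab_ident[unfolded id_def[symmetric]]
        simp del: One_nat_def)
qed

end
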